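(* Let $A$ be a commutative ring, $M$ an $A$-module, $L$ a proper $A$-submodule of $M$, and $T \subseteq A$. If $L$ is a $T$-factroid of $M$, then $\langle T \rangle \cap \operatorname{ann}_A(M/L) = \emptyset$. The converse holds if $L$ is a primary submodule of $M$.
   Context: For $T\subseteq A$, a $T$-factroid of $M$ is an additive subgroup $F$ of $M$ such that for all $x\in M$ and $t\in T$, $tx\in F$ implies $x\in F$. $\langle T\rangle$ is the multiplicative submonoid of $A$ generated by $T$. A proper submodule $L$ of $M$ is primary if for every $r\in A$, either $\{x\in M\mid rx\in L\}=L$ or $r^nM\subseteq L$ for some $n\in\mathbb{N}$. *)

theory Defs
  imports Main "HOL.Modules"
begin

text \<open>Modules: the ring A is a type of class comm_ring_1, the module M is a type of
class ab_group_add with scalar multiplication s satisfying the library locale module s.\<close>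

definition factroid :: "('a::comm_ring_1 \<Rightarrow> 'b::ab_group_add \<Rightarrow> 'b) \<Rightarrow> 'a set \<Rightarrow> 'b set \<Rightarrow> bool" where
  "factroid s T F \<longleftrightarrow>
     (0 \<in> F \<and> (\<forall>x\<in>F. \<forall>y\<in>F. x + y \<in> F) \<and> (\<forall>x\<in>F. - x \<in> F)) \<and>
     (\<forall>x t. t \<in> T \<longrightarrow> s t x \<in> F \<longrightarrow> x \<in> F)"

inductive_set gen_monoid :: "'a::comm_monoid_mult set \<Rightarrow> 'a set" for T where
  one: "1 \<in> gen_monoid T"
| mult: "t \<in> T \<Longrightarrow> a \<in> gen_monoid T \<Longrightarrow> t * a \<in> gen_monoid T"

definition ann_quot :: "('a::comm_ring_1 \<Rightarrow> 'b::ab_group_add \<Rightarrow> 'b) \<Rightarrow> 'b set \<Rightarrow> 'a set" where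
  "ann_quot s L = {r. \<forall>x. s r x \<in> L}"

definition primary_submodule :: "('a::comm_ring_1 \<Rightarrow> 'b::ab_group_add \<Rightarrow> 'b) \<Rightarrow> 'b set \<Rightarrow> bool" where
  "primary_submodule s L \<longleftrightarrow> module.subspace s L \<and> L \<noteq> UNIV \<and>
     (\<forall>r. {x. s r x \<in> L} = L \<or> (\<exists>n::nat. \<forall>x. s (r ^ n) x \<in> L))"

end

theory Submission
  imports Defs
begin

text \<open>A factroid L is closed under division by every element of the monoid generated by T, so an
element of that monoid annihilating M/L would force L = M. Conversely, for primary L and t \<in> T,
the multiplication map by t on M/L is either injective or nilpotent; nilpotence would put a power
of t into the annihilator, so it is injective, which is the factroid condition.\<close>

lemma pow_mem_gen_monoid: "t \<in> T \<Longrightarrow> t ^ n \<in> gen_monoid T"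
  by (induction n) (auto intro: gen_monoid.intros)

lemma factroid_gen_monoid_cancel:
  assumes "module s" and "factroid s T F" and "a \<in> gen_monoid T" and "s a x \<in> F"
  shows "x \<in> F"
  using assms(3,4)
proof (induction a arbitrary: x rule: gen_monoid.induct)
  case one
  then show ?case using module.scale_one[OF assms(1)] by simp
next
  case (mult t a)
  have "s t (s a x) \<in> F"
    using mult.prems module.scale_scale[OF assms(1)] by (metis mult.commute)
  then have "s a x \<in> F"
    using assms(2) mult.hyps(1) unfolding factroid_def by blast
  then show ?case using mult.IH by blast
qed

lemma factroid_gen_monoid_disjoint_ann_quot:
  assumes "module s" and "factroid s T L" and "L \<noteq> UNIV"
  shows "gen_monoid T \<inter> ann_quot s L = {}"
  using factroid_gen_monoid_cancel[OF assms(1,2)] assms(3) unfolding ann_quot_def by blast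

lemma subspace_additive_subgroup:
  assumes "module s" and "module.subspace s L"
  shows "0 \<in> L \<and> (\<forall>x\<in>L. \<forall>y\<in>L. x + y \<in> L) \<and> (\<forall>x\<in>L. - x \<in> L)"
  using module.subspace_0[OF assms] module.subspace_add[OF assms] module.subspace_neg[OF assms]
  by blast

lemma primary_submodule_factroid:
  assumes "module s" and primary: "primary_submodule s L"
    and disjoint: "gen_monoid T \<inter> ann_quot s L = {}"
  shows "factroid s T L"
proof -
  have "x \<in> L" if tx: "s t x \<in> L" and t: "t \<in> T" for t x
  proof -
    have "{x. s t x \<in> L} = L \<or> (\<exists>n::nat. t ^ n \<in> ann_quot s L)"
      using primary unfolding primary_submodule_def ann_quot_def by blast
    moreover have "t ^ n \<notin> ann_quot s L" for n
      using disjoint pow_mem_gen_monoid[OF t] by blast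
    ultimately show "x \<in> L" using tx by blast
  qed
  moreover have "module.subspace s L"
    using primary unfolding primary_submodule_def by blast
  ultimately show ?thesis
    using subspace_additive_subgroup[OF assms(1)] unfolding factroid_def by blast
qed

theorem proposition3p12:
  fixes s :: "'a::comm_ring_1 \<Rightarrow> 'b::ab_group_add \<Rightarrow> 'b"
    and L :: "'b set" and T :: "'a set"
  assumes "module s"
    and "module.subspace s L"
    and "L \<noteq> UNIV"
  shows "(factroid s T L \<longrightarrow> gen_monoid T \<inter> ann_quot s L = {}) \<and>
         (primary_submodule s L \<longrightarrow> gen_monoid T \<inter> ann_quot s L = {} \<longrightarrow> factroid s T L)"
  using factroid_gen_monoid_disjoint_ann_quot[OF assms(1) _ assms(3)]
    primary_submodule_factroid[OF assms(1)]
  by blast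

end
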